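(* Let $\mathcal{F}$ be a finite field, $n$ a positive integer not divisible by the characteristic of $\mathcal{F}$, $\omega\in\mathcal{F}$ a primitive $n$-th root of unity, and $F_n=(\omega^{jk})_{0\le j,k\le n-1}$ with rows $e_0,\dots,e_{n-1}$. Let $r$ be an integer with $\frac n2<r\le n$. Then the code generated by the $(2(n-r)+1)\times n$ matrix with rows $e_r,e_{r+1},\dots,e_{n-1},e_0,e_1,\dots,e_{n-r}$ is a linear complementary dual maximum distance separable code, with parameters $[n,\,2(n-r)+1,\,2r-n]$; its dual code is generated by the remaining rows $e_{n-r+1},\dots,e_{r-1}$.
   Context: Duals are with respect to the standard bilinear form $x\cdot y=\sum x_iy_i$. A code $\mathcal{C}$ is LCD if $\mathcal{C}\cap\mathcal{C}^\perp=0$. An $[n,k,d]$ linear code is mds if $d=n-k+1$. *)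

theory Defs
  imports Main
begin

definition words :: "nat \<Rightarrow> (nat \<Rightarrow> 'a::field) set" where
  "words n = {v. \<forall>i\<ge>n. v i = 0}"

definition lin_span :: "(nat \<Rightarrow> 'a::field) set \<Rightarrow> (nat \<Rightarrow> 'a) set" where
  "lin_span G = {v. \<exists>c. v = (\<lambda>i. \<Sum>g\<in>G. c g * g i)}"

definition lin_indep :: "(nat \<Rightarrow> 'a::field) set \<Rightarrow> bool" where
  "lin_indep B \<longleftrightarrow> (\<forall>c. (\<forall>i. (\<Sum>g\<in>B. c g * g i) = 0) \<longrightarrow> (\<forall>g\<in>B. c g = 0))"

definition code_dim :: "(nat \<Rightarrow> 'a::field) set \<Rightarrow> nat \<Rightarrow> bool" where
  "code_dim C k \<longleftrightarrow> (\<exists>B. finite B \<and> card B = k \<and> B \<subseteq> C \<and> lin_indep B \<and> lin_span B = C)"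

definition hamming_dist :: "nat \<Rightarrow> (nat \<Rightarrow> 'a) \<Rightarrow> (nat \<Rightarrow> 'a) \<Rightarrow> nat" where
  "hamming_dist n v w = card {i. i < n \<and> v i \<noteq> w i}"

definition min_dist :: "nat \<Rightarrow> (nat \<Rightarrow> 'a) set \<Rightarrow> nat" where
  "min_dist n C = Min {hamming_dist n v w | v w. v \<in> C \<and> w \<in> C \<and> v \<noteq> w}"

definition dual_code :: "nat \<Rightarrow> (nat \<Rightarrow> 'a::field) set \<Rightarrow> (nat \<Rightarrow> 'a) set" where
  "dual_code n C = {v \<in> words n. \<forall>c\<in>C. (\<Sum>i<n. v i * c i) = 0}"

definition is_LCD :: "nat \<Rightarrow> (nat \<Rightarrow> 'a::field) set \<Rightarrow> bool" where
  "is_LCD n C \<longleftrightarrow> C \<inter> dual_code n C = {\<lambda>_. 0}"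

definition is_MDS :: "nat \<Rightarrow> (nat \<Rightarrow> 'a::field) set \<Rightarrow> bool" where
  "is_MDS n C \<longleftrightarrow> (\<exists>k. code_dim C k \<and> min_dist n C = n - k + 1)"

definition primitive_root :: "nat \<Rightarrow> 'a::field \<Rightarrow> bool" where
  "primitive_root n w \<longleftrightarrow> w ^ n = 1 \<and> (\<forall>k. 0 < k \<and> k < n \<longrightarrow> w ^ k \<noteq> 1)"

definition fourier_row :: "'a::field \<Rightarrow> nat \<Rightarrow> nat \<Rightarrow> (nat \<Rightarrow> 'a)" where
  "fourier_row w n j = (\<lambda>k. if k < n then w ^ (j * k) else 0)"

end

theory Submission
  imports Defs "HOL-Computational_Algebra.Polynomial"
begin

text \<open>The rows of F_n are orthogonal up to the involution j \<mapsto> -j mod n: e_j \<cdot> e_m is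
  n \<noteq> 0 if n divides j + m, and 0 otherwise. Together with Fourier inversion this shows that the
  dual of the span of the rows indexed by I is spanned by the rows e_j with -j \<notin> I, and that this
  span is LCD whenever I = -I. The index set {r, ..., n-1, 0, ..., n-r} is symmetric with complement
  {n-r+1, ..., r-1}, and it is a cyclic block of length m = 2(n-r)+1. Hence each codeword is, up to
  the nonvanishing twist \<omega>^(rk), the evaluation at the points \<omega>^k of a polynomial of degree
  less than m; a nonzero one vanishes at most m-1 times, and the product of the X - \<omega>^t over
  t < m-1 attains this, so the minimum distance is n - m + 1 = 2r - n.\<close>

definition word_dot :: "nat \<Rightarrow> (nat \<Rightarrow> 'a::field) \<Rightarrow> (nat \<Rightarrow> 'a) \<Rightarrow> 'a" where
  "word_dot n u v = (\<Sum>i<n. u i * v i)"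

definition weight :: "nat \<Rightarrow> (nat \<Rightarrow> 'a::zero) \<Rightarrow> nat" where
  "weight n v = card {i. i < n \<and> v i \<noteq> 0}"

lemma hamming_dist_eq_weight:
  fixes v u :: "nat \<Rightarrow> 'a::ab_group_add"
  shows "hamming_dist n v u = weight n (\<lambda>i. v i - u i)"
  by (simp add: hamming_dist_def weight_def)

lemma min_dist_eqI:
  fixes C :: "(nat \<Rightarrow> 'a::ab_group_add) set"
  assumes diff_closed: "\<And>u v. u \<in> C \<Longrightarrow> v \<in> C \<Longrightarrow> (\<lambda>i. u i - v i) \<in> C"
    and weight_ge: "\<And>v. v \<in> C \<Longrightarrow> v \<noteq> (\<lambda>_. 0) \<Longrightarrow> d \<le> weight n v"
    and v: "v \<in> C" "v \<noteq> (\<lambda>_. 0)" "weight n v = d"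
  shows "min_dist n C = d"
  unfolding min_dist_def
proof (rule Min_eqI)
  let ?D = "{hamming_dist n u u' |u u'. u \<in> C \<and> u' \<in> C \<and> u \<noteq> u'}"
  have "hamming_dist n u u' \<le> n" for u u' :: "nat \<Rightarrow> 'a"
    unfolding hamming_dist_def using card_mono[of "{..<n}" "{i. i < n \<and> u i \<noteq> u' i}"] by auto
  then have "?D \<subseteq> {..n}"
    by auto
  then show "finite ?D"
    using finite_subset by blast
  show "d \<le> e" if "e \<in> ?D" for e
  proof -
    obtain u u' where "u \<in> C" "u' \<in> C" "u \<noteq> u'" and e: "e = hamming_dist n u u'"
      using \<open>e \<in> ?D\<close> by blast
    then have "(\<lambda>i. u i - u' i) \<in> C" "(\<lambda>i. u i - u' i) \<noteq> (\<lambda>_. 0)"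
      by (auto simp: diff_closed fun_eq_iff)
    then show ?thesis
      by (simp add: e hamming_dist_eq_weight weight_ge)
  qed
  have "(\<lambda>_. 0) \<in> C"
    using diff_closed[OF v(1) v(1)] by simp
  then have "hamming_dist n v (\<lambda>_. 0) \<in> ?D"
    using v(1,2) by blast
  then show "d \<in> ?D"
    using v(3) by (simp add: hamming_dist_eq_weight)
qed

lemma sum_pow_unit_root:
  fixes x :: "'a::field"
  assumes "x ^ n = 1"
  shows "(\<Sum>k<n. x ^ k) = (if x = 1 then of_nat n else 0)"
  using assms by (auto simp: geometric_sum)

locale unit_root =
  fixes w :: "'a::field" and n :: nat
  assumes n_pos: "0 < n" and primitive: "primitive_root n w"
begin

abbreviation row :: "nat \<Rightarrow> nat \<Rightarrow> 'a" where
  "row \<equiv> fourier_row w n"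

definition row_comb :: "nat set \<Rightarrow> (nat \<Rightarrow> 'a) \<Rightarrow> nat \<Rightarrow> 'a" where
  "row_comb I a = (\<lambda>k. \<Sum>j\<in>I. a j * row j k)"

definition neg :: "nat \<Rightarrow> nat" where
  "neg j = (n - j) mod n"

lemma pow_n: "w ^ n = 1"
  using primitive by (simp add: primitive_root_def)

lemma w_nonzero: "w \<noteq> 0"
  using pow_n n_pos by (metis power_0_left zero_neq_one not_gr0)

lemma pow_mod: "w ^ (a mod n) = w ^ a"
proof -
  have "w ^ a = w ^ (n * (a div n) + a mod n)"
    by simp
  also have "\<dots> = (w ^ n) ^ (a div n) * w ^ (a mod n)"
    by (simp only: power_add power_mult)
  finally show ?thesis
    by (simp add: pow_n)
qed

lemma pow_eq_1_iff: "w ^ a = 1 \<longleftrightarrow> n dvd a"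
proof
  assume "w ^ a = 1"
  then have "w ^ (a mod n) = 1"
    by (simp add: pow_mod)
  then have "a mod n = 0"
    using primitive n_pos unfolding primitive_root_def by (meson mod_less_divisor neq0_conv)
  then show "n dvd a" by auto
qed (auto simp: power_mult pow_n)

lemma pow_eq_pow_iff: "w ^ a = w ^ b \<longleftrightarrow> a mod n = b mod n"
proof -
  have *: "w ^ a = w ^ b \<longleftrightarrow> a mod n = b mod n" if "a \<le> b" for a b
  proof -
    have "w ^ b = w ^ a * w ^ (b - a)"
      using that by (simp flip: power_add)
    then have "w ^ a = w ^ b \<longleftrightarrow> w ^ (b - a) = 1"
      using w_nonzero by auto
    also have "\<dots> \<longleftrightarrow> a mod n = b mod n"
      using that by (simp add: pow_eq_1_iff mod_eq_dvd_iff_nat eq_commute[of "a mod n"])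
    finally show ?thesis .
  qed
  show ?thesis
    using *[of a b] *[of b a] by (cases "a \<le> b") auto
qed

lemma pow_eq_pow_iff_less: "a < n \<Longrightarrow> b < n \<Longrightarrow> w ^ a = w ^ b \<longleftrightarrow> a = b"
  by (simp add: pow_eq_pow_iff)

lemma neg_less: "neg j < n"
  using n_pos by (simp add: neg_def)

lemma neg_neg: "j < n \<Longrightarrow> neg (neg j) = j"
  unfolding neg_def by (cases "j = 0") (auto simp: mod_if)

lemma pow_neg:
  assumes "j < n"
  shows "w ^ neg j = inverse (w ^ j)"
proof -
  have "j + neg j = (if j = 0 then 0 else n)"
    using assms by (simp add: neg_def)
  then have "w ^ j * w ^ neg j = 1"
    by (simp add: pow_n split: if_splits flip: power_add)
  then show ?thesis
    by (rule inverse_unique[symmetric])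
qed

lemma dvd_add_iff_eq_neg:
  assumes "j < n" "m < n"
  shows "n dvd j + m \<longleftrightarrow> j = neg m"
proof -
  have "n dvd j + m \<longleftrightarrow> w ^ j * w ^ m = 1"
    by (simp add: power_add flip: pow_eq_1_iff)
  also have "\<dots> \<longleftrightarrow> w ^ j = w ^ neg m"
    using assms w_nonzero by (auto simp: pow_neg field_simps)
  also have "\<dots> \<longleftrightarrow> j = neg m"
    using assms neg_less by (simp add: pow_eq_pow_iff_less)
  finally show ?thesis .
qed

lemma pow_pow_n: "(w ^ a) ^ n = 1"
proof -
  have "(w ^ a) ^ n = (w ^ n) ^ a"
    by (simp only: power_mult[symmetric] mult.commute)
  then show ?thesis
    by (simp add: pow_n)
qed

lemma row_less: "k < n \<Longrightarrow> row j k = w ^ (j * k)"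
  by (simp add: fourier_row_def)

lemma row_comb_in_words: "row_comb I a \<in> words n"
  by (simp add: words_def row_comb_def fourier_row_def)

lemma row_comb_diff: "row_comb I a k - row_comb I b k = row_comb I (\<lambda>j. a j - b j) k"
  by (simp add: row_comb_def sum_subtractf algebra_simps)

lemma row_in_row_span:
  assumes "finite I" "j \<in> I"
  shows "row j \<in> range (row_comb I)"
proof (rule range_eqI)
  have "(if i = j then 1 else 0) * row i k = (if i = j then row j k else 0)" for i k
    by simp
  then show "row j = row_comb I (\<lambda>i. if i = j then 1 else 0)"
    using assms by (simp add: row_comb_def fun_eq_iff)
qed

lemma inj_on_row: "inj_on row {..<n}"
proof (rule inj_onI)
  fix j m assume jm: "j \<in> {..<n}" "m \<in> {..<n}" and "row j = row m"
  show "j = m"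
  proof (cases "1 < n")
    case True
    with \<open>row j = row m\<close> have "w ^ j = w ^ m"
      by (metis row_less mult_1_right)
    with jm show ?thesis
      by (simp add: pow_eq_pow_iff_less)
  qed (use jm in auto)
qed

lemma lin_span_rows:
  assumes "I \<subseteq> {..<n}"
  shows "lin_span (row ` I) = range (row_comb I)"
proof -
  have inj: "inj_on row I"
    using inj_on_row assms by (rule inj_on_subset)
  have "lin_span (row ` I) = range (\<lambda>c. row_comb I (c \<circ> row))"
    by (auto simp: lin_span_def row_comb_def sum.reindex[OF inj])
  also have "\<dots> = range (row_comb I)"
  proof -
    have "row_comb I a = row_comb I ((\<lambda>g. a (the_inv_into I row g)) \<circ> row)" for a
      by (simp add: row_comb_def the_inv_into_f_f[OF inj])
    then show ?thesis by blast
  qed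
  finally show ?thesis .
qed

lemma sum_rows_neg:
  assumes "k < n" "l < n"
  shows "(\<Sum>j<n. row (neg j) l * row j k) = (if l = k then of_nat n else 0)"
proof -
  have "row (neg j) l * row j k = (w ^ k / w ^ l) ^ j" if "j < n" for j
  proof -
    have "row (neg j) l * row j k = inverse ((w ^ j) ^ l) * (w ^ j) ^ k"
      using assms that by (simp add: row_less neg_less power_mult pow_neg power_inverse)
    also have "\<dots> = (w ^ k / w ^ l) ^ j"
      by (simp add: divide_inverse power_mult_distrib power_inverse mult.commute flip: power_mult)
    finally show ?thesis .
  qed
  then have "(\<Sum>j<n. row (neg j) l * row j k) = (\<Sum>j<n. (w ^ k / w ^ l) ^ j)"
    by simp
  moreover have "(w ^ k / w ^ l) ^ n = 1"
    by (simp add: power_divide pow_pow_n)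
  moreover have "w ^ k / w ^ l = 1 \<longleftrightarrow> l = k"
    using assms w_nonzero by (auto simp: pow_eq_pow_iff_less)
  ultimately show ?thesis
    by (simp add: sum_pow_unit_root)
qed

definition cyclic_block :: "nat \<Rightarrow> nat \<Rightarrow> nat set" where
  "cyclic_block s m = (\<lambda>t. (s + t) mod n) ` {..<m}"

lemma cyclic_block_subset: "cyclic_block s m \<subseteq> {..<n}"
  using n_pos by (auto simp: cyclic_block_def)

lemma inj_on_cyclic_shift:
  assumes "m \<le> n"
  shows "inj_on (\<lambda>t. (s + t) mod n) {..<m}"
proof (rule inj_onI)
  fix t t' assume "t \<in> {..<m}" "t' \<in> {..<m}" "(s + t) mod n = (s + t') mod n"
  then have "w ^ s * w ^ t = w ^ s * w ^ t'"
    by (simp add: pow_eq_pow_iff flip: power_add)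
  then show "t = t'"
    using w_nonzero assms \<open>t \<in> {..<m}\<close> \<open>t' \<in> {..<m}\<close> by (auto simp: pow_eq_pow_iff_less)
qed

lemma card_cyclic_block: "m \<le> n \<Longrightarrow> card (cyclic_block s m) = m"
  by (simp add: cyclic_block_def card_image inj_on_cyclic_shift)

lemma row_comb_cyclic_block:
  assumes "m \<le> n" "k < n"
  shows "row_comb (cyclic_block s m) a k
    = w ^ (s * k) * poly (\<Sum>t<m. monom (a ((s + t) mod n)) t) (w ^ k)"
proof -
  have "row ((s + t) mod n) k = w ^ (s * k) * (w ^ k) ^ t" for t
  proof -
    have "w ^ ((s + t) mod n * k) = w ^ ((s + t) * k)"
      by (simp add: pow_eq_pow_iff mod_mult_left_eq)
    then show ?thesis
      using assms(2) by (simp add: row_less algebra_simps power_add power_mult)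
  qed
  moreover have "row_comb (cyclic_block s m) a k = (\<Sum>t<m. a ((s + t) mod n) * row ((s + t) mod n) k)"
    unfolding row_comb_def cyclic_block_def sum.reindex[OF inj_on_cyclic_shift[OF assms(1)]] by simp
  ultimately show ?thesis
    by (simp add: poly_sum poly_monom sum_distrib_left algebra_simps)
qed

lemma eval_in_cyclic_block_code:
  assumes "m \<le> n" "degree q < m"
  obtains a where "\<And>k. k < n \<Longrightarrow> row_comb (cyclic_block s m) a k = w ^ (s * k) * poly q (w ^ k)"
proof
  let ?shift = "\<lambda>t. (s + t) mod n"
  define a where "a j = coeff q (the_inv_into {..<m} ?shift j)" for j
  have "(\<Sum>t<m. monom (a (?shift t)) t) = (\<Sum>t\<le>m - 1. monom (coeff q t) t)"
  proof (rule sum.cong)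
    show "{..<m} = {..m - 1}"
      using assms(2) by auto
    show "monom (a (?shift t)) t = monom (coeff q t) t" if "t \<in> {..m - 1}" for t
      using that assms(2) by (simp add: a_def the_inv_into_f_f[OF inj_on_cyclic_shift[OF assms(1)]])
  qed
  also have "\<dots> = q"
    using assms(2) by (intro poly_as_sum_of_monoms') simp
  finally show "row_comb (cyclic_block s m) a k = w ^ (s * k) * poly q (w ^ k)" if "k < n" for k
    using row_comb_cyclic_block[OF assms(1) that] by simp
qed

lemma weight_cong: "(\<And>k. k < n \<Longrightarrow> u k = v k) \<Longrightarrow> weight n u = weight n v"
  unfolding weight_def by (metis (mono_tags, lifting) Collect_cong)

lemma weight_eval_ge:
  assumes "q \<noteq> 0" "\<And>k. k < n \<Longrightarrow> c k \<noteq> 0"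
  shows "n - degree q \<le> weight n (\<lambda>k. c k * poly q (w ^ k))"
proof -
  define Z where "Z = {k. k < n \<and> poly q (w ^ k) = 0}"
  have "inj_on (\<lambda>k. w ^ k) Z"
    by (rule inj_onI) (auto simp: Z_def pow_eq_pow_iff_less)
  then have "card Z \<le> card {x. poly q x = 0}"
    by (rule card_inj_on_le) (auto simp: Z_def poly_roots_finite[OF assms(1)])
  also have "\<dots> \<le> degree q"
    using assms(1) by (rule card_poly_roots_bound)
  finally have "card Z \<le> degree q" .
  moreover have "weight n (\<lambda>k. c k * poly q (w ^ k)) = card ({..<n} - Z)"
    unfolding weight_def using assms(2) by (intro arg_cong[where f = card]) (auto simp: Z_def)
  moreover have "card ({..<n} - Z) = n - card Z"
    by (subst card_Diff_subset) (auto simp: Z_def)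
  ultimately show ?thesis by linarith
qed

lemma weight_eval_vanishing_poly:
  assumes "d \<le> n" "\<And>k. k < n \<Longrightarrow> c k \<noteq> 0"
  shows "weight n (\<lambda>k. c k * poly (\<Prod>t<d. [:- (w ^ t), 1:]) (w ^ k)) = n - d"
proof -
  have "{k. k < n \<and> c k * poly (\<Prod>t<d. [:- (w ^ t), 1:]) (w ^ k) \<noteq> 0} = {d..<n}"
    using assms by (auto simp: poly_prod pow_eq_pow_iff_less)
  then show ?thesis
    by (simp add: weight_def)
qed

lemma weight_cyclic_block_code_ge:
  assumes "m \<le> n" and nonzero_word: "row_comb (cyclic_block s m) b \<noteq> (\<lambda>_. 0)"
  shows "n - m + 1 \<le> weight n (row_comb (cyclic_block s m) b)"
proof -
  define p where "p = (\<Sum>t<m. monom (b ((s + t) mod n)) t)"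
  have eval: "row_comb (cyclic_block s m) b k = w ^ (s * k) * poly p (w ^ k)" if "k < n" for k
    using row_comb_cyclic_block[OF assms(1) that] by (simp add: p_def)
  have "p \<noteq> 0"
  proof
    assume "p = 0"
    then have "row_comb (cyclic_block s m) b k = 0" for k
      using eval row_comb_in_words[of "cyclic_block s m" b] by (cases "k < n") (auto simp: words_def)
    with nonzero_word show False
      by auto
  qed
  then have "n - degree p \<le> weight n (row_comb (cyclic_block s m) b)"
    using weight_eval_ge[of p "\<lambda>k. w ^ (s * k)"] by (simp add: weight_cong[OF eval] w_nonzero)
  moreover have "degree p \<le> m - 1"
    unfolding p_def by (rule degree_sum_le) (auto intro: order.trans[OF degree_monom_le])
  moreover have "m \<noteq> 0"
    using nonzero_word by (auto simp: cyclic_block_def row_comb_def)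
  ultimately show ?thesis
    using assms(1) by linarith
qed

lemma weight_cyclic_block_code_attained:
  assumes "0 < m" "m \<le> n"
  obtains a where "row_comb (cyclic_block s m) a \<noteq> (\<lambda>_. 0)"
    and "weight n (row_comb (cyclic_block s m) a) = n - m + 1"
proof -
  define q where "q = (\<Prod>t<m - 1. [:- (w ^ t), 1:])"
  have "degree q < m"
    using assms(1) by (simp add: q_def degree_prod_eq_sum_degree)
  then obtain a where a: "\<And>k. k < n \<Longrightarrow> row_comb (cyclic_block s m) a k = w ^ (s * k) * poly q (w ^ k)"
    using assms(2) eval_in_cyclic_block_code by blast
  have "weight n (row_comb (cyclic_block s m) a) = weight n (\<lambda>k. w ^ (s * k) * poly q (w ^ k))"
    by (rule weight_cong[OF a])
  also have "\<dots> = n - (m - 1)"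
    unfolding q_def using assms(2) by (intro weight_eval_vanishing_poly) (auto simp: w_nonzero)
  finally have "weight n (row_comb (cyclic_block s m) a) = n - m + 1"
    using assms by simp
  moreover from this have "row_comb (cyclic_block s m) a \<noteq> (\<lambda>_. 0)"
    by (auto simp: weight_def)
  ultimately show ?thesis
    using that by blast
qed

lemma min_dist_cyclic_block_code:
  assumes "0 < m" "m \<le> n"
  shows "min_dist n (range (row_comb (cyclic_block s m))) = n - m + 1"
proof -
  obtain a where "row_comb (cyclic_block s m) a \<noteq> (\<lambda>_. 0)"
    and "weight n (row_comb (cyclic_block s m) a) = n - m + 1"
    using weight_cyclic_block_code_attained[OF assms] .
  then show ?thesis
    using weight_cyclic_block_code_ge[OF assms(2)]
    by (intro min_dist_eqI) (auto simp: row_comb_diff)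
qed

lemma cyclic_block_symmetric:
  assumes "n < 2 * r" "r \<le> n"
  shows "cyclic_block r (2 * (n - r) + 1) = {r..<n} \<union> {0..n - r}"
  unfolding cyclic_block_def
proof (intro equalityI subsetI)
  fix j assume "j \<in> (\<lambda>t. (r + t) mod n) ` {..<2 * (n - r) + 1}"
  then obtain t where t: "t < 2 * (n - r) + 1" and j: "j = (r + t) mod n"
    by blast
  show "j \<in> {r..<n} \<union> {0..n - r}"
  proof (cases "r + t < n")
    case False
    then have "j = r + t - n"
      using assms t by (simp add: j le_mod_geq)
    then have "j \<le> n - r"
      using assms t by arith
    then show ?thesis
      by simp
  qed (simp add: j)
next
  fix j assume j: "j \<in> {r..<n} \<union> {0..n - r}"
  show "j \<in> (\<lambda>t. (r + t) mod n) ` {..<2 * (n - r) + 1}"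
  proof (cases "r \<le> j")
    case True
    then show ?thesis
      using j assms by (intro image_eqI[of _ _ "j - r"]) auto
  next
    case False
    have "(r + (j + (n - r))) mod n = j"
      using j False assms by simp
    then show ?thesis
      using j False assms by (intro image_eqI[of _ _ "j + (n - r)"]) auto
  qed
qed

lemma neg_symmetric_block:
  assumes "n < 2 * r" "r \<le> n"
  shows "neg ` ({r..<n} \<union> {0..n - r}) \<subseteq> {r..<n} \<union> {0..n - r}"
  using assms by (auto simp: neg_def mod_if)

lemma neg_not_in_symmetric_block:
  assumes "n < 2 * r" "r \<le> n"
  shows "{j. j < n \<and> neg j \<notin> {r..<n} \<union> {0..n - r}} = {n - r + 1..<r}"
  using assms by (auto simp: neg_def mod_if)

end

locale fourier = unit_root +
  assumes n_nonzero: "of_nat n \<noteq> (0::'a)"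
begin

lemma word_dot_rows: "word_dot n (row j) (row m) = (if n dvd j + m then of_nat n else 0)"
proof -
  have "word_dot n (row j) (row m) = (\<Sum>k<n. (w ^ (j + m)) ^ k)"
    unfolding word_dot_def
    by (intro sum.cong) (simp_all add: row_less add_mult_distrib power_add power_mult power_mult_distrib)
  also have "\<dots> = (if n dvd j + m then of_nat n else 0)"
    by (simp add: sum_pow_unit_root pow_pow_n pow_eq_1_iff)
  finally show ?thesis .
qed

lemma word_dot_row_comb_row:
  assumes "I \<subseteq> {..<n}" "m < n"
  shows "word_dot n (row_comb I a) (row m) = (if neg m \<in> I then of_nat n * a (neg m) else 0)"
proof -
  have fin: "finite I"
    using finite_subset[OF assms(1)] by blast
  have "word_dot n (row_comb I a) (row m) = (\<Sum>j\<in>I. a j * word_dot n (row j) (row m))"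
    unfolding word_dot_def row_comb_def
    by (simp add: sum_distrib_left sum_distrib_right mult.assoc sum.swap[of _ I])
  also have "\<dots> = (\<Sum>j\<in>I. if j = neg m then of_nat n * a j else 0)"
    using assms by (intro sum.cong) (auto simp: word_dot_rows dvd_add_iff_eq_neg)
  also have "\<dots> = (if neg m \<in> I then of_nat n * a (neg m) else 0)"
    using fin by simp
  finally show ?thesis .
qed

lemma word_dot_row_comb_right: "word_dot n u (row_comb I a) = (\<Sum>j\<in>I. a j * word_dot n u (row j))"
  unfolding word_dot_def row_comb_def
  by (simp add: sum_distrib_left sum.swap[of _ I] algebra_simps)

lemma row_comb_coeff:
  assumes "I \<subseteq> {..<n}" "j \<in> I"
  shows "a j = word_dot n (row_comb I a) (row (neg j)) / of_nat n"
  using assms n_nonzero by (auto simp: word_dot_row_comb_row neg_less neg_neg)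

lemma row_comb_eq_0_iff:
  assumes "I \<subseteq> {..<n}"
  shows "row_comb I a = (\<lambda>_. 0) \<longleftrightarrow> (\<forall>j\<in>I. a j = 0)"
proof
  assume zero: "row_comb I a = (\<lambda>_. 0)"
  show "\<forall>j\<in>I. a j = 0"
  proof
    fix j assume "j \<in> I"
    then have "a j = word_dot n (row_comb I a) (row (neg j)) / of_nat n"
      by (rule row_comb_coeff[OF assms])
    then show "a j = 0"
      by (simp add: zero word_dot_def)
  qed
qed (simp add: row_comb_def)

lemma code_dim_row_span:
  assumes "I \<subseteq> {..<n}"
  shows "code_dim (lin_span (row ` I)) (card I)"
  unfolding code_dim_def
proof (intro exI conjI)
  have inj: "inj_on row I"
    using inj_on_row assms by (rule inj_on_subset)
  show "finite (row ` I)" "card (row ` I) = card I"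
    using finite_subset[OF assms] card_image[OF inj] by auto
  show "row ` I \<subseteq> lin_span (row ` I)"
    unfolding lin_span_rows[OF assms] using row_in_row_span finite_subset[OF assms] by blast
  show "lin_indep (row ` I)"
    unfolding lin_indep_def
  proof (intro allI impI)
    fix c assume "\<forall>i. (\<Sum>g\<in>row ` I. c g * g i) = 0"
    then have "row_comb I (c \<circ> row) = (\<lambda>_. 0)"
      by (simp add: row_comb_def sum.reindex[OF inj] fun_eq_iff)
    then show "\<forall>g\<in>row ` I. c g = 0"
      using row_comb_eq_0_iff[OF assms] by simp
  qed
qed simp

lemma fourier_inversion:
  assumes "v \<in> words n"
  shows "v = row_comb {..<n} (\<lambda>j. word_dot n v (row (neg j)) / of_nat n)"
proof
  fix k
  show "v k = row_comb {..<n} (\<lambda>j. word_dot n v (row (neg j)) / of_nat n) k"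
  proof (cases "k < n")
    case False
    then show ?thesis
      using assms by (simp add: words_def row_comb_def fourier_row_def)
  next
    case k: True
    have "row_comb {..<n} (\<lambda>j. word_dot n v (row (neg j)) / of_nat n) k
        = (\<Sum>j<n. \<Sum>l<n. v l * (row (neg j) l * row j k) / of_nat n)"
      unfolding row_comb_def word_dot_def by (simp add: sum_divide_distrib sum_distrib_right mult.assoc)
    also have "\<dots> = (\<Sum>l<n. v l / of_nat n * (\<Sum>j<n. row (neg j) l * row j k))"
      by (subst sum.swap) (simp add: sum_distrib_left)
    also have "\<dots> = (\<Sum>l<n. if l = k then v l else 0)"
      using n_nonzero k by (intro sum.cong) (simp_all add: sum_rows_neg)
    also have "\<dots> = v k"
      using k by simp
    finally show ?thesis ..
  qed
qed

lemma mem_dual_row_span_iff: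
  assumes "I \<subseteq> {..<n}"
  shows "v \<in> dual_code n (range (row_comb I)) \<longleftrightarrow> v \<in> words n \<and> (\<forall>j\<in>I. word_dot n v (row j) = 0)"
proof -
  have "(\<forall>c\<in>range (row_comb I). word_dot n v c = 0) \<longleftrightarrow> (\<forall>j\<in>I. word_dot n v (row j) = 0)"
  proof
    assume "\<forall>c\<in>range (row_comb I). word_dot n v c = 0"
    then show "\<forall>j\<in>I. word_dot n v (row j) = 0"
      using row_in_row_span[OF finite_subset[OF assms]] by blast
  qed (auto simp: word_dot_row_comb_right)
  then show ?thesis
    by (simp add: dual_code_def word_dot_def)
qed

lemma dual_row_span:
  assumes "I \<subseteq> {..<n}"
  shows "dual_code n (range (row_comb I)) = range (row_comb {j. j < n \<and> neg j \<notin> I})"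
    (is "_ = range (row_comb ?J)")
proof (intro set_eqI iffI)
  fix v assume "v \<in> dual_code n (range (row_comb I))"
  then have v: "v \<in> words n" "\<And>j. j \<in> I \<Longrightarrow> word_dot n v (row j) = 0"
    using mem_dual_row_span_iff[OF assms] by auto
  define \<alpha> where "\<alpha> j = word_dot n v (row (neg j)) / of_nat n" for j
  have "v = row_comb {..<n} \<alpha>"
    unfolding \<alpha>_def by (rule fourier_inversion[OF v(1)])
  also have "\<dots> = row_comb ?J \<alpha>"
    unfolding row_comb_def
  proof (rule ext, rule sum.mono_neutral_right)
    show "\<forall>j\<in>{..<n} - ?J. \<alpha> j * row j k = 0" for k
      using v(2) by (auto simp: \<alpha>_def)
  qed auto
  finally show "v \<in> range (row_comb ?J)"
    by simp
next
  fix v assume "v \<in> range (row_comb ?J)"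
  then obtain b where b: "v = row_comb ?J b"
    by blast
  have "word_dot n v (row j) = 0" if "j \<in> I" for j
  proof -
    have "neg j \<notin> ?J"
      using that assms neg_neg by auto
    moreover have "?J \<subseteq> {..<n}" "j < n"
      using that assms by auto
    ultimately show ?thesis
      by (simp only: b word_dot_row_comb_row if_False)
  qed
  then show "v \<in> dual_code n (range (row_comb I))"
    using mem_dual_row_span_iff[OF assms] row_comb_in_words b by blast
qed

lemma row_span_inter_dual:
  assumes "I \<subseteq> {..<n}" "neg ` I \<subseteq> I"
  shows "range (row_comb I) \<inter> dual_code n (range (row_comb I)) = {\<lambda>_. 0}"
proof
  show "range (row_comb I) \<inter> dual_code n (range (row_comb I)) \<subseteq> {\<lambda>_. 0}"
  proof
    fix v assume v: "v \<in> range (row_comb I) \<inter> dual_code n (range (row_comb I))"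
    then obtain a where a: "v = row_comb I a"
      by blast
    have orth: "word_dot n v (row j) = 0" if "j \<in> I" for j
      using v that mem_dual_row_span_iff[OF assms(1)] by blast
    have "a j = 0" if "j \<in> I" for j
    proof -
      have "a j = word_dot n v (row (neg j)) / of_nat n"
        unfolding a by (rule row_comb_coeff[OF assms(1) that])
      moreover have "neg j \<in> I"
        using assms(2) that by blast
      ultimately show ?thesis
        by (simp add: orth)
    qed
    then show "v \<in> {\<lambda>_. 0}"
      using row_comb_eq_0_iff[OF assms(1)] a by simp
  qed
  have "(\<lambda>_. 0) = row_comb I (\<lambda>_. 0)"
    by (simp add: row_comb_def)
  moreover have "(\<lambda>_. 0) \<in> dual_code n (range (row_comb I))"
    by (simp add: mem_dual_row_span_iff[OF assms(1)] words_def word_dot_def)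
  ultimately show "{\<lambda>_. 0} \<subseteq> range (row_comb I) \<inter> dual_code n (range (row_comb I))"
    by auto
qed

end

theorem mainTheorem9:
  fixes w :: "'a::{finite,field}" and n r :: nat
  assumes "0 < n"
    and "of_nat n \<noteq> (0::'a)"
    and "primitive_root n w"
    and "n < 2 * r" and "r \<le> n"
  defines "C \<equiv> lin_span (fourier_row w n ` ({r..<n} \<union> {0..n - r}))"
  shows "C \<subseteq> words n \<and> is_LCD n C \<and> is_MDS n C
     \<and> code_dim C (2 * (n - r) + 1) \<and> min_dist n C = 2 * r - n
     \<and> dual_code n C = lin_span (fourier_row w n ` {n - r + 1..<r})"
proof -
  interpret fourier w n
    using assms by unfold_locales
  let ?S = "{r..<n} \<union> {0..n - r}"
  have block: "?S = cyclic_block r (2 * (n - r) + 1)"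
    using cyclic_block_symmetric assms by simp
  have S_sub: "?S \<subseteq> {..<n}"
    using cyclic_block_subset block by simp
  have C: "C = range (row_comb ?S)"
    unfolding C_def using lin_span_rows[OF S_sub] .
  have dim: "code_dim C (2 * (n - r) + 1)"
    using code_dim_row_span[OF S_sub] card_cyclic_block assms
    unfolding C_def block by simp
  have dist: "min_dist n C = 2 * r - n"
    using min_dist_cyclic_block_code[of "2 * (n - r) + 1" r] assms
    unfolding C block by simp
  have "dual_code n C = range (row_comb {j. j < n \<and> neg j \<notin> ?S})"
    unfolding C by (rule dual_row_span[OF S_sub])
  also have "\<dots> = lin_span (fourier_row w n ` {n - r + 1..<r})"
    using assms by (simp only: neg_not_in_symmetric_block) (intro lin_span_rows[symmetric]; auto)
  finally have dual: "dual_code n C = lin_span (fourier_row w n ` {n - r + 1..<r})" .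
  have "is_LCD n C"
    using row_span_inter_dual[OF S_sub neg_symmetric_block] assms
    by (simp add: is_LCD_def C)
  moreover have "is_MDS n C"
    using dim dist assms unfolding is_MDS_def by (intro exI[of _ "2 * (n - r) + 1"]) simp
  moreover have "C \<subseteq> words n"
    using row_comb_in_words by (auto simp: C)
  ultimately show ?thesis
    using dim dist dual by blast
qed

end
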